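(* Let $\mathcal{A}$ be a topological ring containing $\mathbb{Q}$, let $\mathcal{B}$ be a complete topological $\mathcal{A}$-algebra and let $\partial$ be a topologically integrable $\mathcal{A}$-derivation of $\mathcal{B}$. Then: (a) For every $f\in\operatorname{Ker}(\partial)$, the $\mathcal{A}$-derivation $f\partial$ of $\mathcal{B}$ is topologically integrable. (b) For every multiplicatively closed subset $S$ of $\operatorname{Ker}(\partial)$, the induced $\mathcal{A}$-derivation $\widehat{S^{-1}\partial}$ of $\widehat{S^{-1}\mathcal{B}}$ is topologically integrable. (c) For every surjective open homomorphism of complete topological rings $\pi\colon\mathcal{B}\to\mathcal{C}$ such that $\partial(\operatorname{Ker}\pi)\subseteq\operatorname{Ker}\pi$, the induced $\mathcal{A}$-derivation $\overline{\partial}$ of $\mathcal{C}\cong\mathcal{B}/\operatorname{Ker}\pi$ is topologically integrable. (d) For every topologically integrable $\mathcal{A}$-derivation $\partial'$ of $\mathcal{B}$ such that $\partial\circ\partial'=\partial'\circ\partial$, the $\mathcal{A}$-derivation $\partial+\partial'$ of $\mathcal{B}$ is topologically integrable.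
   Context: Conventions: topological rings are linearly topologized with a countable fundamental system of open ideals; homomorphisms are continuous; complete means the canonical map to $\varprojlim_{\mathfrak{a}}\mathcal{B}/\mathfrak{a}$ (open ideals, discrete quotients) is a topological isomorphism; a complete topological $\mathcal{A}$-algebra is a complete topological ring with a continuous homomorphism from $\mathcal{A}$. A continuous $\mathcal{A}$-derivation $\partial\colon\mathcal{B}\to\mathcal{B}$ is a continuous $\mathcal{A}$-linear map satisfying the Leibniz rule; it is topologically integrable if the sequence of iterates $(\partial^i)_{i\in\mathbb{N}}$ converges continuously to $0$: for every $b\in\mathcal{B}$ and every open ideal $\mathfrak{b}'$ there exist an open ideal $\mathfrak{b}$ and $n_0$ with $\partial^n(b+\mathfrak{b})\subseteq\mathfrak{b}'$ for all $n\ge n_0$. For a multiplicatively closed $S\subseteq\mathcal{B}$, $\widehat{S^{-1}\mathcal{B}}$ is the separated completion of $S^{-1}\mathcal{B}$ for the linear topology generated by the ideals $S^{-1}\mathfrak{b}$, $\mathfrak{b}$ open, with canonical map $\tilde j\colon\mathcal{B}\to\widehat{S^{-1}\mathcal{B}}$, and $\widehat{S^{-1}\partial}$ is the continuous derivation of $\widehat{S^{-1}\mathcal{B}}$ induced by $\partial$ (satisfying $\widehat{S^{-1}\partial}\circ\tilde j=\tilde j\circ\partial$). In (c), $\overline{\partial}$ is the derivation with $\overline{\partial}\circ\pi=\pi\circ\partial$. *)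

theory Defs
  imports Main
begin

text \<open>A linear topology with a countable fundamental system of open ideals is
represented by a decreasing sequence of ideals I 0, I 1, ... (every countable
fundamental system can be replaced by a decreasing one generating the same topology).\<close>

definition is_ideal :: "'b::comm_ring_1 set \<Rightarrow> bool" where
  "is_ideal J \<longleftrightarrow> 0 \<in> J \<and> (\<forall>x\<in>J. \<forall>y\<in>J. x + y \<in> J) \<and> (\<forall>x\<in>J. - x \<in> J)
     \<and> (\<forall>r x. x \<in> J \<longrightarrow> r * x \<in> J)"

definition lin_top :: "(nat \<Rightarrow> 'b::comm_ring_1 set) \<Rightarrow> bool" where
  "lin_top I \<longleftrightarrow> (\<forall>n. is_ideal (I n)) \<and> (\<forall>n. I (Suc n) \<subseteq> I n)"

definition open_ideal :: "(nat \<Rightarrow> 'b::comm_ring_1 set) \<Rightarrow> 'b set \<Rightarrow> bool" where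
  "open_ideal I J \<longleftrightarrow> is_ideal J \<and> (\<exists>n. I n \<subseteq> J)"

text \<open>Completeness: the canonical map to the inverse limit of the discrete quotients
B / I n is bijective (it is then automatically a topological isomorphism).
Injectivity = separatedness; surjectivity = every compatible family (given by
representatives x n) comes from an element.\<close>

definition complete_top :: "(nat \<Rightarrow> 'b::comm_ring_1 set) \<Rightarrow> bool" where
  "complete_top I \<longleftrightarrow> lin_top I \<and> (\<Inter>n. I n) = {0}
     \<and> (\<forall>x. (\<forall>n. x (Suc n) - x n \<in> I n) \<longrightarrow> (\<exists>b. \<forall>n. b - x n \<in> I n))"

definition cont_map :: "(nat \<Rightarrow> 'b::comm_ring_1 set) \<Rightarrow> (nat \<Rightarrow> 'c::comm_ring_1 set)
    \<Rightarrow> ('b \<Rightarrow> 'c) \<Rightarrow> bool" where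
  "cont_map I J f \<longleftrightarrow> (\<forall>x m. \<exists>k. \<forall>y\<in>I k. f (x + y) - f x \<in> J m)"

definition open_map :: "(nat \<Rightarrow> 'b::comm_ring_1 set) \<Rightarrow> (nat \<Rightarrow> 'c::comm_ring_1 set)
    \<Rightarrow> ('b \<Rightarrow> 'c) \<Rightarrow> bool" where
  "open_map I J f \<longleftrightarrow> (\<forall>x k. \<exists>m. {f x + z | z. z \<in> J m} \<subseteq> f ` {x + y | y. y \<in> I k})"

definition ring_hom :: "('b::comm_ring_1 \<Rightarrow> 'c::comm_ring_1) \<Rightarrow> bool" where
  "ring_hom f \<longleftrightarrow> f 1 = 1 \<and> (\<forall>x y. f (x + y) = f x + f y) \<and> (\<forall>x y. f (x * y) = f x * f y)"

text \<open>Continuous A-derivation, where B is an A-algebra via the homomorphism phi.\<close>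

definition cont_A_der :: "(nat \<Rightarrow> 'b::comm_ring_1 set) \<Rightarrow> ('a::comm_ring_1 \<Rightarrow> 'b)
    \<Rightarrow> ('b \<Rightarrow> 'b) \<Rightarrow> bool" where
  "cont_A_der I phi D \<longleftrightarrow> cont_map I I D \<and> (\<forall>x y. D (x + y) = D x + D y)
     \<and> (\<forall>a x. D (phi a * x) = phi a * D x) \<and> (\<forall>x y. D (x * y) = x * D y + y * D x)"

definition top_integrable :: "(nat \<Rightarrow> 'b::comm_ring_1 set) \<Rightarrow> ('b \<Rightarrow> 'b) \<Rightarrow> bool" where
  "top_integrable I D \<longleftrightarrow> (\<forall>b J'. open_ideal I J' \<longrightarrow>
     (\<exists>J n0. open_ideal I J \<and> (\<forall>n\<ge>n0. (D ^^ n) ` {b + y | y. y \<in> J} \<subseteq> J')))"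

text \<open>S^{-1}B / S^{-1}(I n) is realized as (B x S) modulo the relation
 (b,s) ~ (b',s') iff u (b s' - b' s) \<in> I n for some u in S
 (i.e. b/s - b'/s' \<in> S^{-1}(I n)).  The separated completion is the inverse limit of
these quotients: compatible sequences of classes.  Its fundamental system of open ideals
consists of the kernels of the projections to the n-th quotient.\<close>

definition loc_rel :: "(nat \<Rightarrow> 'b::comm_ring_1 set) \<Rightarrow> 'b set \<Rightarrow> nat \<Rightarrow> (('b \<times> 'b) \<times> ('b \<times> 'b)) set" where
  "loc_rel I S n = {((b, s), (b', s')). s \<in> S \<and> s' \<in> S \<and> (\<exists>u\<in>S. u * (b * s' - b' * s) \<in> I n)}"

definition loc_quot :: "(nat \<Rightarrow> 'b::comm_ring_1 set) \<Rightarrow> 'b set \<Rightarrow> nat \<Rightarrow> ('b \<times> 'b) set set" where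
  "loc_quot I S n = (UNIV \<times> S) // loc_rel I S n"

definition loc_compl :: "(nat \<Rightarrow> 'b::comm_ring_1 set) \<Rightarrow> 'b set \<Rightarrow> (nat \<Rightarrow> ('b \<times> 'b) set) set" where
  "loc_compl I S = {x. (\<forall>n. x n \<in> loc_quot I S n) \<and> (\<forall>n. x (Suc n) \<subseteq> x n)}"

text \<open>The derivation of the completion induced by D (for S inside Ker D we have
(S^{-1}D)(b/s) = D(b)/s); its n-th component is computed from representatives at
sufficiently deep levels (possible by continuity of D).\<close>

definition loc_der :: "(nat \<Rightarrow> 'b::comm_ring_1 set) \<Rightarrow> 'b set \<Rightarrow> ('b \<Rightarrow> 'b)
    \<Rightarrow> (nat \<Rightarrow> ('b \<times> 'b) set) \<Rightarrow> (nat \<Rightarrow> ('b \<times> 'b) set)" where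
  "loc_der I S D x = (\<lambda>n. THE c. \<exists>k. \<forall>k'\<ge>k. \<forall>p\<in>x k'. c = loc_rel I S n `` {(D (fst p), snd p)})"

text \<open>Topological integrability on the completion, stated with the fundamental system
of open ideals (kernels of the projections); y \<in> x + ker_k means y k = x k.\<close>

definition compl_top_integrable :: "(nat \<Rightarrow> 'b::comm_ring_1 set) \<Rightarrow> 'b set
    \<Rightarrow> ((nat \<Rightarrow> ('b \<times> 'b) set) \<Rightarrow> (nat \<Rightarrow> ('b \<times> 'b) set)) \<Rightarrow> bool" where
  "compl_top_integrable I S Dh \<longleftrightarrow> (\<forall>x\<in>loc_compl I S. \<forall>m. \<exists>k n0. \<forall>n\<ge>n0.
     \<forall>y\<in>loc_compl I S. y k = x k \<longrightarrow> (Dh ^^ n) y m = loc_rel I S m `` {(0, 1)})"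

end

theory Submission
  imports Defs HOL.Modules
begin

text \<open>For a continuous additive map D of a linearly topologized ring, topological
integrability is equivalent to two conditions: the iterates D^n are equicontinuous at 0 (for
every m there is a k with D^n(I k) inside I m for all n), and D^n b tends to 0 for every b.
Equicontinuity comes from integrability at b = 0 together with the continuity of the
finitely many iterates below the threshold. Both conditions survive the four
constructions: (f D)^n = f^n D^n when D f = 0; (D + D')^n b lies in an ideal once all
D^k D'^l b with k + l = n do, because D and D' commute; Dbar^n (pi b) = pi (D^n b) and pi
is continuous and open; and on the completed localization D^n (b/s) = D^n(b)/s since S lies
in the kernel of D, while equicontinuity makes this independent of the chosen
representative b/s.\<close>

lemma is_ideal_add: "is_ideal J \<Longrightarrow> x \<in> J \<Longrightarrow> y \<in> J \<Longrightarrow> x + y \<in> J"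
  and is_ideal_mult: "is_ideal J \<Longrightarrow> x \<in> J \<Longrightarrow> r * x \<in> J"
  by (simp_all add: is_ideal_def)

lemma lin_top_ideal: "lin_top I \<Longrightarrow> is_ideal (I n)"
  by (simp add: lin_top_def)

lemma lin_top_antimono: "lin_top I \<Longrightarrow> m \<le> n \<Longrightarrow> I n \<subseteq> I m"
  unfolding lin_top_def by (metis lift_Suc_antimono_le)

lemma complete_top_lin_top: "complete_top I \<Longrightarrow> lin_top I"
  by (simp add: complete_top_def)

lemma open_ideal_lin_top: "lin_top I \<Longrightarrow> open_ideal I (I m)"
  by (auto simp: open_ideal_def lin_top_def)

lemma eventually_lin_top_image_subset:
  assumes "lin_top I" and "f ` I k \<subseteq> J"
  shows "\<forall>\<^sub>F q in sequentially. f ` I q \<subseteq> J"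
  using assms lin_top_antimono unfolding eventually_sequentially by blast

lemma additive_funpow:
  fixes f :: "'a::ab_group_add \<Rightarrow> 'a"
  shows "additive f \<Longrightarrow> additive (f ^^ n)"
  by (induction n) (simp_all add: additive_def)

lemma cont_map_additive_iff:
  assumes "additive f"
  shows "cont_map I J f \<longleftrightarrow> (\<forall>m. \<exists>k. f ` I k \<subseteq> J m)"
  using assms by (simp add: cont_map_def additive.add image_subset_iff)

lemma cont_A_derD:
  assumes "cont_A_der I phi D"
  shows "additive D" and "\<exists>k. D ` I k \<subseteq> I m"
    and "D (phi a * x) = phi a * D x" and "D (x * y) = x * D y + y * D x"
proof -
  have "cont_map I I D" and add: "\<forall>x y. D (x + y) = D x + D y"
    and "\<forall>a x. D (phi a * x) = phi a * D x" and "\<forall>x y. D (x * y) = x * D y + y * D x"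
    using assms unfolding cont_A_der_def by blast+
  moreover have "additive D"
    using add by (simp add: additive_def)
  ultimately show "additive D" and "\<exists>k. D ` I k \<subseteq> I m"
    and "D (phi a * x) = phi a * D x" and "D (x * y) = x * D y + y * D x"
    using cont_map_additive_iff by blast+
qed

lemma cont_A_derI:
  assumes "additive D" and "\<And>m. \<exists>k. D ` I k \<subseteq> I m"
    and "\<And>a x. D (phi a * x) = phi a * D x" and "\<And>x y. D (x * y) = x * D y + y * D x"
  shows "cont_A_der I phi D"
  using assms cont_map_additive_iff[of D I I] by (simp add: cont_A_der_def additive.add)

section \<open>Topological integrability as equicontinuity plus convergence\<close>

definition iterates_equicontinuous :: "(nat \<Rightarrow> 'b::comm_ring_1 set) \<Rightarrow> ('b \<Rightarrow> 'b) \<Rightarrow> bool" where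
  "iterates_equicontinuous I D \<longleftrightarrow> (\<forall>m. \<exists>k. \<forall>n. (D ^^ n) ` I k \<subseteq> I m)"

definition iterates_tendsto_zero :: "(nat \<Rightarrow> 'b::comm_ring_1 set) \<Rightarrow> ('b \<Rightarrow> 'b) \<Rightarrow> bool" where
  "iterates_tendsto_zero I D \<longleftrightarrow> (\<forall>b m. \<forall>\<^sub>F n in sequentially. (D ^^ n) b \<in> I m)"

lemma eventually_funpow_image_subset:
  assumes "lin_top I" and "additive D" and "cont_map I I D"
  shows "\<forall>\<^sub>F k in sequentially. (D ^^ n) ` I k \<subseteq> I m"
proof (induction n arbitrary: m)
  case 0
  show ?case
    using eventually_lin_top_image_subset[OF assms(1), of id m] by simp
next
  case (Suc n)
  obtain l where "D ` I l \<subseteq> I m"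
    using assms(2,3) cont_map_additive_iff by blast
  with Suc.IH[of l] show ?case
    by (elim eventually_mono) auto
qed

lemma top_integrableD:
  assumes "top_integrable I D" and "open_ideal I J'"
  obtains J n0 where "open_ideal I J" and "\<And>n y. n \<ge> n0 \<Longrightarrow> y \<in> J \<Longrightarrow> (D ^^ n) (b + y) \<in> J'"
proof -
  obtain J n0 where J: "open_ideal I J" and tail: "\<forall>n\<ge>n0. (D ^^ n) ` {b + y | y. y \<in> J} \<subseteq> J'"
    using assms(1)[unfolded top_integrable_def, rule_format, where b = b, OF assms(2)] by meson
  show ?thesis
  proof (rule that[OF J])
    fix n y assume "n0 \<le> n" and "y \<in> J"
    then show "(D ^^ n) (b + y) \<in> J'"
      using tail by blast
  qed
qed

lemma top_integrable_imp_equicontinuous: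
  assumes lin: "lin_top I" and add: "additive D" and cont: "cont_map I I D"
    and int: "top_integrable I D"
  shows "iterates_equicontinuous I D"
  unfolding iterates_equicontinuous_def
proof
  fix m
  obtain J n0 where J: "open_ideal I J" and tail: "\<And>n y. n \<ge> n0 \<Longrightarrow> y \<in> J \<Longrightarrow> (D ^^ n) (0 + y) \<in> I m"
    using top_integrableD[OF int open_ideal_lin_top[OF lin, of m], where b = 0] by metis
  obtain p where p: "I p \<subseteq> J"
    using J by (auto simp: open_ideal_def)
  have "\<forall>\<^sub>F k in sequentially. (\<forall>n\<in>{..<n0}. (D ^^ n) ` I k \<subseteq> I m) \<and> I k \<subseteq> J"
    using eventually_funpow_image_subset[OF lin add cont]
      eventually_lin_top_image_subset[OF lin, of id p J] p
    by (simp add: eventually_conj eventually_ball_finite)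
  then obtain k where head: "\<forall>n\<in>{..<n0}. (D ^^ n) ` I k \<subseteq> I m" and "I k \<subseteq> J"
    unfolding eventually_sequentially by (meson order_refl)
  have "(D ^^ n) ` I k \<subseteq> I m" for n
  proof (cases "n < n0")
    case True
    then show ?thesis
      using head by simp
  next
    case False
    show ?thesis
    proof (rule image_subsetI)
      fix y assume "y \<in> I k"
      then show "(D ^^ n) y \<in> I m"
        using tail[of n y] False \<open>I k \<subseteq> J\<close> by auto
    qed
  qed
  then show "\<exists>k. \<forall>n. (D ^^ n) ` I k \<subseteq> I m"
    by blast
qed

lemma top_integrable_imp_tendsto_zero:
  assumes "lin_top I" and "top_integrable I D"
  shows "iterates_tendsto_zero I D"
  unfolding iterates_tendsto_zero_def
proof (intro allI)
  fix b m
  obtain J n0 where "open_ideal I J" and "\<And>n y. n \<ge> n0 \<Longrightarrow> y \<in> J \<Longrightarrow> (D ^^ n) (b + y) \<in> I m"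
    using top_integrableD[OF assms(2) open_ideal_lin_top[OF assms(1), of m], where b = b] by metis
  then have "\<forall>n\<ge>n0. (D ^^ n) b \<in> I m"
    by (metis add.right_neutral is_ideal_def open_ideal_def)
  then show "\<forall>\<^sub>F n in sequentially. (D ^^ n) b \<in> I m"
    by (auto simp: eventually_sequentially)
qed

lemma top_integrableI:
  assumes lin: "lin_top I" and add: "additive D"
    and equi: "iterates_equicontinuous I D" and lim: "iterates_tendsto_zero I D"
  shows "top_integrable I D"
  unfolding top_integrable_def
proof (intro allI impI)
  fix b J' assume "open_ideal I J'"
  then obtain m where m: "I m \<subseteq> J'"
    by (auto simp: open_ideal_def)
  obtain k where k: "\<And>n. (D ^^ n) ` I k \<subseteq> I m"
    using equi unfolding iterates_equicontinuous_def by meson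
  obtain n0 where n0: "\<And>n. n \<ge> n0 \<Longrightarrow> (D ^^ n) b \<in> I m"
    using lim unfolding iterates_tendsto_zero_def eventually_sequentially by meson
  have "(D ^^ n) (b + y) \<in> J'" if "n \<ge> n0" and "y \<in> I k" for n y
  proof -
    have "(D ^^ n) (b + y) = (D ^^ n) b + (D ^^ n) y"
      using additive.add[OF additive_funpow[OF add]] .
    also have "\<dots> \<in> I m"
      using n0[OF that(1)] k[of n] that(2) by (auto intro: is_ideal_add lin_top_ideal[OF lin])
    finally show ?thesis
      using m by blast
  qed
  then have "\<forall>n\<ge>n0. (D ^^ n) ` {b + y | y. y \<in> I k} \<subseteq> J'"
    by auto
  then show "\<exists>J n0. open_ideal I J \<and> (\<forall>n\<ge>n0. (D ^^ n) ` {b + y | y. y \<in> J} \<subseteq> J')"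
    using open_ideal_lin_top[OF lin] by meson
qed

lemma iterates_equicontinuous_cont_zero:
  assumes "iterates_equicontinuous I D"
  obtains k where "D ` I k \<subseteq> I m"
proof -
  obtain k where "\<And>n. (D ^^ n) ` I k \<subseteq> I m"
    using assms unfolding iterates_equicontinuous_def by meson
  then have "(D ^^ Suc 0) ` I k \<subseteq> I m" .
  then show ?thesis
    using that by simp
qed

lemma top_integrable_iff:
  assumes "lin_top I" and "cont_A_der I phi D"
  shows "top_integrable I D \<longleftrightarrow> iterates_equicontinuous I D \<and> iterates_tendsto_zero I D"
proof -
  have "additive D" and "cont_map I I D"
    using assms(2) by (simp_all add: cont_A_der_def additive_def)
  then show ?thesis
    using assms(1) top_integrable_imp_equicontinuous top_integrable_imp_tendsto_zero
      top_integrableI by metis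
qed

section \<open>Multiples by constants and sums of commuting derivations\<close>

lemma der_one:
  assumes "\<And>x y. D (x * y) = x * D y + y * D (x :: 'b::comm_ring_1)"
  shows "D 1 = 0"
  using assms[of 1 1] by simp

lemma der_mult_kernel:
  assumes "\<And>x y. D (x * y) = x * D y + y * D (x :: 'b::comm_ring_1)" and "D c = 0"
  shows "D (c * x) = c * D x"
  using assms by simp

lemma funpow_der_mult_kernel:
  assumes "\<And>x y. D (x * y) = x * D y + y * D (x :: 'b::comm_ring_1)" and "D c = 0"
  shows "(D ^^ n) (c * x) = c * (D ^^ n) x"
  by (induction n) (simp_all add: der_mult_kernel[OF assms])

lemma der_power_kernel:
  assumes "\<And>x y. D (x * y) = x * D y + y * D (x :: 'b::comm_ring_1)" and "D f = 0"
  shows "D (f ^ n) = 0"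
  by (induction n) (simp_all add: assms der_one)

lemma funpow_kernel_mult_der:
  assumes "\<And>x y. D (x * y) = x * D y + y * D (x :: 'b::comm_ring_1)" and "D f = 0"
  shows "((\<lambda>b. f * D b) ^^ n) x = f ^ n * (D ^^ n) x"
  by (induction n) (simp_all add: der_mult_kernel[OF assms(1) der_power_kernel[OF assms]])

lemma cont_A_der_mult:
  assumes lin: "lin_top I" and der: "cont_A_der I phi D"
  shows "cont_A_der I phi (\<lambda>b. f * D b)"
proof (rule cont_A_derI)
  show "additive (\<lambda>b. f * D b)"
    using cont_A_derD(1)[OF der] by (simp add: additive_def distrib_left)
  show "\<exists>k. (\<lambda>b. f * D b) ` I k \<subseteq> I m" for m
  proof -
    obtain k where "D ` I k \<subseteq> I m"
      using cont_A_derD(2)[OF der] by meson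
    then have "(\<lambda>b. f * D b) ` I k \<subseteq> I m"
      using is_ideal_mult[OF lin_top_ideal[OF lin]] by blast
    then show ?thesis ..
  qed
  show "f * D (phi a * x) = phi a * (f * D x)" for a x
    by (simp add: cont_A_derD(3)[OF der] mult.left_commute)
  show "f * D (x * y) = x * (f * D y) + y * (f * D x)" for x y
    by (simp add: cont_A_derD(4)[OF der] algebra_simps)
qed

lemma top_integrable_kernel_mult:
  assumes lin: "lin_top I" and der: "cont_A_der I phi D" and int: "top_integrable I D"
    and kernel: "D f = 0"
  shows "top_integrable I (\<lambda>b. f * D b)"
proof -
  have mult: "((\<lambda>b. f * D b) ^^ n) x \<in> I m" if "(D ^^ n) x \<in> I m" for n x m
    using that is_ideal_mult[OF lin_top_ideal[OF lin]]
    unfolding funpow_kernel_mult_der[OF cont_A_derD(4)[OF der] kernel] by blast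
  have "iterates_equicontinuous I D" and lim: "iterates_tendsto_zero I D"
    using int top_integrable_iff[OF lin der] by simp_all
  have "iterates_equicontinuous I (\<lambda>b. f * D b)"
    unfolding iterates_equicontinuous_def
  proof
    fix m
    obtain k where k: "\<And>n. (D ^^ n) ` I k \<subseteq> I m"
      using \<open>iterates_equicontinuous I D\<close> unfolding iterates_equicontinuous_def by meson
    show "\<exists>k. \<forall>n. ((\<lambda>b. f * D b) ^^ n) ` I k \<subseteq> I m"
    proof (intro exI allI image_subsetI)
      fix n y assume "y \<in> I k"
      with k[of n] show "((\<lambda>b. f * D b) ^^ n) y \<in> I m"
        by (intro mult) blast
    qed
  qed
  moreover have "iterates_tendsto_zero I (\<lambda>b. f * D b)"
    unfolding iterates_tendsto_zero_def
  proof (intro allI)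
    fix x m
    show "\<forall>\<^sub>F n in sequentially. ((\<lambda>b. f * D b) ^^ n) x \<in> I m"
      using lim[unfolded iterates_tendsto_zero_def, rule_format, of x m]
      by (rule eventually_mono) (rule mult)
  qed
  ultimately show ?thesis
    using top_integrable_iff[OF lin cont_A_der_mult[OF lin der]] by simp
qed

lemma funpow_intertwine:
  assumes "E \<circ> f = f \<circ> D"
  shows "(E ^^ n) (f x) = f ((D ^^ n) x)"
  using assms by (induction n) (simp_all add: fun_eq_iff)

lemma funpow_funpow_commute:
  assumes "f \<circ> g = g \<circ> f"
  shows "(f ^^ m) ((g ^^ n) x) = (g ^^ n) ((f ^^ m) x)"
proof -
  have "g \<circ> (f ^^ m) = (f ^^ m) \<circ> g"
    using funpow_intertwine[OF assms] by (simp add: fun_eq_iff)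
  from funpow_intertwine[OF this] show ?thesis
    by simp
qed

lemma funpow_add_mem_ideal:
  fixes D D' :: "'b::comm_ring_1 \<Rightarrow> 'b"
  assumes add: "additive D" "additive D'" and comm: "D \<circ> D' = D' \<circ> D" and J: "is_ideal J"
    and terms: "\<And>k l. k + l = n \<Longrightarrow> (D ^^ k) ((D' ^^ l) x) \<in> J"
  shows "((\<lambda>b. D b + D' b) ^^ n) x \<in> J"
  using terms
proof (induction n arbitrary: x)
  case 0
  then show ?case
    by fastforce
next
  case (Suc n)
  let ?E = "\<lambda>b. D b + D' b"
  have "additive ?E"
    using add by (simp add: additive_def)
  have "(?E ^^ Suc n) x = (?E ^^ n) (D x + D' x)"
    by (simp only: funpow_Suc_right o_apply)
  also have "\<dots> = (?E ^^ n) (D x) + (?E ^^ n) (D' x)"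
    by (rule additive.add[OF additive_funpow[OF \<open>additive ?E\<close>]])
  also have "\<dots> \<in> J"
  proof (rule is_ideal_add[OF J])
    show "(?E ^^ n) (D x) \<in> J"
    proof (rule Suc.IH)
      fix k l assume "k + l = n"
      then have "(D ^^ Suc k) ((D' ^^ l) x) \<in> J"
        by (intro Suc.prems) simp
      then show "(D ^^ k) ((D' ^^ l) (D x)) \<in> J"
        using funpow_funpow_commute[OF comm[symmetric], of l 1 x] by (simp add: funpow_swap1)
    qed
    show "(?E ^^ n) (D' x) \<in> J"
    proof (rule Suc.IH)
      fix k l assume "k + l = n"
      then have "(D ^^ k) ((D' ^^ Suc l) x) \<in> J"
        by (intro Suc.prems) simp
      then show "(D ^^ k) ((D' ^^ l) (D' x)) \<in> J"
        by (simp add: funpow_swap1)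
    qed
  qed
  finally show ?case .
qed

lemma cont_A_der_add:
  assumes lin: "lin_top I" and der: "cont_A_der I phi D" and der': "cont_A_der I phi D'"
  shows "cont_A_der I phi (\<lambda>b. D b + D' b)"
proof (rule cont_A_derI)
  show "additive (\<lambda>b. D b + D' b)"
    using cont_A_derD(1)[OF der] cont_A_derD(1)[OF der'] by (simp add: additive_def)
  show "\<exists>k. (\<lambda>b. D b + D' b) ` I k \<subseteq> I m" for m
  proof -
    obtain k k' where "D ` I k \<subseteq> I m" and "D' ` I k' \<subseteq> I m"
      using cont_A_derD(2)[OF der] cont_A_derD(2)[OF der'] by meson
    moreover have "I (max k k') \<subseteq> I k" and "I (max k k') \<subseteq> I k'"
      using lin_top_antimono[OF lin] by simp_all
    ultimately have "(\<lambda>b. D b + D' b) ` I (max k k') \<subseteq> I m"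
      using is_ideal_add[OF lin_top_ideal[OF lin]] by blast
    then show ?thesis ..
  qed
  show "D (phi a * x) + D' (phi a * x) = phi a * (D x + D' x)" for a x
    by (simp add: cont_A_derD(3)[OF der] cont_A_derD(3)[OF der'] distrib_left)
  show "D (x * y) + D' (x * y) = x * (D y + D' y) + y * (D x + D' x)" for x y
    by (simp add: cont_A_derD(4)[OF der] cont_A_derD(4)[OF der'] algebra_simps)
qed

lemma top_integrable_add_commuting:
  assumes lin: "lin_top I" and der: "cont_A_der I phi D" and int: "top_integrable I D"
    and der': "cont_A_der I phi D'" and int': "top_integrable I D'" and comm: "D \<circ> D' = D' \<circ> D"
  shows "top_integrable I (\<lambda>b. D b + D' b)"
proof -
  have equi: "\<And>m. \<exists>k. \<forall>n. (D ^^ n) ` I k \<subseteq> I m" and lim: "iterates_tendsto_zero I D"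
    and equi': "\<And>m. \<exists>k. \<forall>n. (D' ^^ n) ` I k \<subseteq> I m" and lim': "iterates_tendsto_zero I D'"
    using int int' top_integrable_iff[OF lin der] top_integrable_iff[OF lin der']
    unfolding iterates_equicontinuous_def by simp_all
  have sum_mem: "((\<lambda>b. D b + D' b) ^^ n) x \<in> I m"
    if "\<And>k l. k + l = n \<Longrightarrow> (D ^^ k) ((D' ^^ l) x) \<in> I m" for n x m
    using funpow_add_mem_ideal[OF cont_A_derD(1)[OF der] cont_A_derD(1)[OF der'] comm
        lin_top_ideal[OF lin] that] .
  have "iterates_equicontinuous I (\<lambda>b. D b + D' b)"
    unfolding iterates_equicontinuous_def
  proof
    fix m
    obtain k where k: "\<And>n. (D ^^ n) ` I k \<subseteq> I m"
      using equi by meson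
    obtain k' where k': "\<And>n. (D' ^^ n) ` I k' \<subseteq> I k"
      using equi' by meson
    show "\<exists>k. \<forall>n. ((\<lambda>b. D b + D' b) ^^ n) ` I k \<subseteq> I m"
    proof (intro exI allI image_subsetI sum_mem)
      fix n y l j assume "y \<in> I k'"
      then have "(D' ^^ j) y \<in> I k"
        using k' by blast
      then show "(D ^^ l) ((D' ^^ j) y) \<in> I m"
        using k by blast
    qed
  qed
  moreover have "iterates_tendsto_zero I (\<lambda>b. D b + D' b)"
    unfolding iterates_tendsto_zero_def
  proof (intro allI)
    fix b m
    obtain k where k: "\<And>n. (D ^^ n) ` I k \<subseteq> I m"
      using equi by meson
    obtain k' where k': "\<And>n. (D' ^^ n) ` I k' \<subseteq> I m"
      using equi' by meson
    obtain n1 where n1: "\<And>l. l \<ge> n1 \<Longrightarrow> (D' ^^ l) b \<in> I k"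
      using lim' unfolding iterates_tendsto_zero_def eventually_sequentially by meson
    obtain n2 where n2: "\<And>j. j \<ge> n2 \<Longrightarrow> (D ^^ j) b \<in> I k'"
      using lim unfolding iterates_tendsto_zero_def eventually_sequentially by meson
    have "((\<lambda>b. D b + D' b) ^^ n) b \<in> I m" if n: "n \<ge> n1 + n2" for n
    proof (rule sum_mem)
      fix j l assume "j + l = n"
      then consider "l \<ge> n1" | "j \<ge> n2"
        using n by (cases "l \<ge> n1") auto
      then show "(D ^^ j) ((D' ^^ l) b) \<in> I m"
      proof cases
        case 1
        then show ?thesis
          using k n1 by blast
      next
        case 2
        then have "(D' ^^ l) ((D ^^ j) b) \<in> I m"
          using k' n2 by blast
        then show ?thesis
          by (simp add: funpow_funpow_commute[OF comm])
      qed
    qed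
    then show "\<forall>\<^sub>F n in sequentially. ((\<lambda>b. D b + D' b) ^^ n) b \<in> I m"
      unfolding eventually_sequentially by blast
  qed
  ultimately show ?thesis
    using top_integrable_iff[OF lin cont_A_der_add[OF lin der der']] by simp
qed

section \<open>Quotients\<close>

lemma ring_hom_additive: "ring_hom f \<Longrightarrow> additive f"
  by (simp add: ring_hom_def additive_def)

lemma open_map_zero:
  assumes "additive f" and "open_map I J f"
  obtains m where "J m \<subseteq> f ` I k"
proof -
  obtain m where "{f 0 + z | z. z \<in> J m} \<subseteq> f ` {0 + y | y. y \<in> I k}"
    using assms(2) unfolding open_map_def by meson
  then have "J m \<subseteq> f ` I k"
    by (simp add: additive.zero[OF assms(1)])
  then show ?thesis
    by (rule that)
qed

lemma iterates_equicontinuous_quotient: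
  assumes add: "additive pi" and cont: "cont_map I J pi" and opn: "open_map I J pi"
    and equi: "iterates_equicontinuous I D" and intertwine: "Dbar \<circ> pi = pi \<circ> D"
  shows "iterates_equicontinuous J Dbar"
  unfolding iterates_equicontinuous_def
proof
  fix m
  obtain p where p: "pi ` I p \<subseteq> J m"
    using cont cont_map_additive_iff[OF add] by meson
  obtain q where q: "\<And>n. (D ^^ n) ` I q \<subseteq> I p"
    using equi unfolding iterates_equicontinuous_def by meson
  obtain k where k: "J k \<subseteq> pi ` I q"
    using open_map_zero[OF add opn] .
  show "\<exists>k. \<forall>n. (Dbar ^^ n) ` J k \<subseteq> J m"
  proof (intro exI allI image_subsetI)
    fix n z assume "z \<in> J k"
    then obtain y where "y \<in> I q" and "z = pi y"
      using k by blast
    then show "(Dbar ^^ n) z \<in> J m"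
      using p q[of n] by (auto simp: funpow_intertwine[OF intertwine])
  qed
qed

lemma iterates_tendsto_zero_quotient:
  assumes add: "additive pi" and cont: "cont_map I J pi" and "surj pi"
    and lim: "iterates_tendsto_zero I D" and intertwine: "Dbar \<circ> pi = pi \<circ> D"
  shows "iterates_tendsto_zero J Dbar"
  unfolding iterates_tendsto_zero_def
proof (intro allI)
  fix c m
  obtain b where c: "c = pi b"
    using \<open>surj pi\<close> by (metis surjD)
  obtain p where p: "pi ` I p \<subseteq> J m"
    using cont cont_map_additive_iff[OF add] by meson
  have "\<forall>\<^sub>F n in sequentially. (D ^^ n) b \<in> I p"
    using lim unfolding iterates_tendsto_zero_def by blast
  then show "\<forall>\<^sub>F n in sequentially. (Dbar ^^ n) c \<in> J m"
    by (rule eventually_mono) (use p in \<open>auto simp: c funpow_intertwine[OF intertwine]\<close>)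
qed

lemma cont_A_der_quotient:
  assumes der: "cont_A_der I phi D" and hom: "ring_hom pi" and "surj pi"
    and equi: "iterates_equicontinuous J Dbar" and intertwine: "Dbar \<circ> pi = pi \<circ> D"
  shows "cont_A_der J (pi \<circ> phi) Dbar"
proof -
  have pi_add: "pi (x + y) = pi x + pi y" and pi_mult: "pi (x * y) = pi x * pi y" for x y
    using hom by (simp_all add: ring_hom_def)
  have Dbar_pi: "Dbar (pi b) = pi (D b)" for b
    using intertwine by (metis comp_apply)
  have lift: "\<exists>a. x = pi a" for x
    using \<open>surj pi\<close> by (metis surjD)
  show ?thesis
  proof (rule cont_A_derI)
    show "additive Dbar"
      unfolding additive_def
    proof (intro allI)
      fix x y
      obtain a c where "x = pi a" and "y = pi c"
        using lift by meson
      then show "Dbar (x + y) = Dbar x + Dbar y"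
        by (simp add: pi_add[symmetric] Dbar_pi additive.add[OF cont_A_derD(1)[OF der]])
    qed
    show "\<exists>k. Dbar ` J k \<subseteq> J m" for m
      using iterates_equicontinuous_cont_zero[OF equi] by meson
    show "Dbar ((pi \<circ> phi) a * x) = (pi \<circ> phi) a * Dbar x" for a x
    proof -
      obtain c where "x = pi c"
        using lift by meson
      then show ?thesis
        by (simp add: pi_mult[symmetric] Dbar_pi cont_A_derD(3)[OF der])
    qed
    show "Dbar (x * y) = x * Dbar y + y * Dbar x" for x y
    proof -
      obtain a c where "x = pi a" and "y = pi c"
        using lift by meson
      then show ?thesis
        by (simp add: pi_add[symmetric] pi_mult[symmetric] Dbar_pi cont_A_derD(4)[OF der])
    qed
  qed
qed

lemma cont_A_der_top_integrable_quotient: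
  assumes lin: "lin_top I" and der: "cont_A_der I phi D" and int: "top_integrable I D"
    and linJ: "lin_top J" and hom: "ring_hom pi" and cont: "cont_map I J pi" and "surj pi"
    and opn: "open_map I J pi" and intertwine: "Dbar \<circ> pi = pi \<circ> D"
  shows "cont_A_der J (pi \<circ> phi) Dbar \<and> top_integrable J Dbar"
proof -
  have add: "additive pi"
    using hom by (rule ring_hom_additive)
  have equi: "iterates_equicontinuous J Dbar"
    using iterates_equicontinuous_quotient[OF add cont opn _ intertwine] int
      top_integrable_iff[OF lin der] by blast
  have lim: "iterates_tendsto_zero J Dbar"
    using iterates_tendsto_zero_quotient[OF add cont \<open>surj pi\<close> _ intertwine] int
      top_integrable_iff[OF lin der] by blast
  have "cont_A_der J (pi \<circ> phi) Dbar"
    using cont_A_der_quotient[OF der hom \<open>surj pi\<close> equi intertwine] .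
  with equi lim show ?thesis
    using top_integrable_iff[OF linJ] by blast
qed

section \<open>Completed localization\<close>

lemma loc_rel_map:
  assumes "additive E" and S_linear: "\<And>s x. s \<in> S \<Longrightarrow> E (s * x) = s * E x"
    and "E ` I k \<subseteq> I n" and "((b, s), (b', s')) \<in> loc_rel I S k"
  shows "((E b, s), (E b', s')) \<in> loc_rel I S n"
proof -
  obtain u where "u \<in> S" and "s \<in> S" and "s' \<in> S" and "u * (b * s' - b' * s) \<in> I k"
    using assms(4) by (auto simp: loc_rel_def)
  moreover have "E (u * (b * s' - b' * s)) = u * (E b * s' - E b' * s)"
    using calculation(1-3)
    by (simp add: S_linear additive.diff[OF assms(1)] mult.commute[of _ s] mult.commute[of _ s'])
  ultimately have "u \<in> S" and "s \<in> S" and "s' \<in> S" and "u * (E b * s' - E b' * s) \<in> I n"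
    using assms(3) by auto
  then show ?thesis
    by (auto simp: loc_rel_def)
qed

context
  fixes I :: "nat \<Rightarrow> 'b::comm_ring_1 set" and S :: "'b set"
  assumes lin: "lin_top I" and one_S: "1 \<in> S" and mult_S: "\<And>s t. s \<in> S \<Longrightarrow> t \<in> S \<Longrightarrow> s * t \<in> S"
begin

lemma equiv_loc_rel: "equiv (UNIV \<times> S) (loc_rel I S n)"
proof (rule equivI)
  have J: "is_ideal (I n)"
    using lin by (rule lin_top_ideal)
  show "loc_rel I S n \<subseteq> (UNIV \<times> S) \<times> (UNIV \<times> S)"
    by (auto simp: loc_rel_def)
  show "refl_on (UNIV \<times> S) (loc_rel I S n)"
    using one_S J by (auto intro!: refl_onI simp: loc_rel_def is_ideal_def)
  show "sym (loc_rel I S n)"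
  proof (rule symI)
    fix p p' assume "(p, p') \<in> loc_rel I S n"
    then obtain b s b' s' u where "p = (b, s)" "p' = (b', s')" "s \<in> S" "s' \<in> S" "u \<in> S"
      and "u * (b * s' - b' * s) \<in> I n"
      by (auto simp: loc_rel_def)
    moreover from this have "- (u * (b * s' - b' * s)) \<in> I n"
      using J by (simp add: is_ideal_def)
    then have "u * (b' * s - b * s') \<in> I n"
      by (simp add: algebra_simps)
    ultimately show "(p', p) \<in> loc_rel I S n"
      by (auto simp: loc_rel_def)
  qed
  show "trans (loc_rel I S n)"
  proof (rule transI)
    fix p p' p'' assume "(p, p') \<in> loc_rel I S n" and "(p', p'') \<in> loc_rel I S n"
    then obtain b s b' s' b'' s'' u v where "p = (b, s)" "p' = (b', s')" "p'' = (b'', s'')"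
      and S: "s \<in> S" "s' \<in> S" "s'' \<in> S" "u \<in> S" "v \<in> S"
      and uv: "u * (b * s' - b' * s) \<in> I n" "v * (b' * s'' - b'' * s') \<in> I n"
      by (auto simp: loc_rel_def)
    have "(v * s'') * (u * (b * s' - b' * s)) + (u * s) * (v * (b' * s'' - b'' * s')) \<in> I n"
      using is_ideal_add[OF J is_ideal_mult[OF J uv(1)] is_ideal_mult[OF J uv(2)]] .
    moreover have "(v * s'') * (u * (b * s' - b' * s)) + (u * s) * (v * (b' * s'' - b'' * s'))
        = (u * v * s') * (b * s'' - b'' * s)"
      by (simp add: algebra_simps)
    ultimately show "(p, p'') \<in> loc_rel I S n"
      using S mult_S \<open>p = (b, s)\<close> \<open>p'' = (b'', s'')\<close> by (auto simp: loc_rel_def)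
  qed
qed

lemma loc_quot_class: "X \<in> loc_quot I S n \<Longrightarrow> p \<in> X \<Longrightarrow> X = loc_rel I S n `` {p}"
  unfolding loc_quot_def by (metis quotientE equiv_class_eq equiv_loc_rel Image_singleton_iff)

lemma loc_quot_nonempty: "X \<in> loc_quot I S n \<Longrightarrow> \<exists>p. p \<in> X"
  unfolding loc_quot_def using in_quotient_imp_non_empty[OF equiv_loc_rel] by blast

lemma loc_quot_subset: "X \<in> loc_quot I S n \<Longrightarrow> X \<subseteq> UNIV \<times> S"
  unfolding loc_quot_def by (rule in_quotient_imp_subset[OF equiv_loc_rel])

lemma loc_class_in_quot: "s \<in> S \<Longrightarrow> loc_rel I S n `` {(b, s)} \<in> loc_quot I S n"
  unfolding loc_quot_def by (rule quotientI) simp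

lemma loc_rel_antimono: "m \<le> n \<Longrightarrow> loc_rel I S n \<subseteq> loc_rel I S m"
  unfolding loc_rel_def using lin_top_antimono[OF lin] by blast

lemma loc_compl_quot: "x \<in> loc_compl I S \<Longrightarrow> x k \<in> loc_quot I S k"
  by (simp add: loc_compl_def)

lemma loc_compl_antimono: "x \<in> loc_compl I S \<Longrightarrow> m \<le> k \<Longrightarrow> x k \<subseteq> x m"
  unfolding loc_compl_def by (metis (mono_tags, lifting) lift_Suc_antimono_le mem_Collect_eq)

lemma loc_der_eqI:
  assumes x: "x \<in> loc_compl I S"
    and c: "\<And>k' b s. k' \<ge> k \<Longrightarrow> (b, s) \<in> x k' \<Longrightarrow> c = loc_rel I S n `` {(D b, s)}"
  shows "loc_der I S D x n = c"
  unfolding loc_der_def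
proof (rule the_equality)
  show "\<exists>k. \<forall>k'\<ge>k. \<forall>p\<in>x k'. c = loc_rel I S n `` {(D (fst p), snd p)}"
    using c by force
next
  fix c' assume "\<exists>k. \<forall>k'\<ge>k. \<forall>p\<in>x k'. c' = loc_rel I S n `` {(D (fst p), snd p)}"
  then obtain k' where c': "\<And>k'' p. k'' \<ge> k' \<Longrightarrow> p \<in> x k'' \<Longrightarrow> c' = loc_rel I S n `` {(D (fst p), snd p)}"
    by blast
  obtain b s where "(b, s) \<in> x (max k k')"
    using loc_quot_nonempty[OF loc_compl_quot[OF x]] by fast
  then show "c' = c"
    using c c' by (metis fst_conv snd_conv max.cobounded1 max.cobounded2)
qed

context
  fixes phi :: "'a::comm_ring_1 \<Rightarrow> 'b" and D :: "'b \<Rightarrow> 'b"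
  assumes der: "cont_A_der I phi D" and kernel: "\<And>s. s \<in> S \<Longrightarrow> D s = 0"
begin

lemma funpow_der_S_linear: "s \<in> S \<Longrightarrow> (D ^^ n) (s * x) = s * (D ^^ n) x"
  using funpow_der_mult_kernel[OF cont_A_derD(4)[OF der] kernel] .

lemma loc_rel_funpow_der:
  assumes "(D ^^ n) ` I k \<subseteq> I m" and "((b, s), (b', s')) \<in> loc_rel I S k"
  shows "(((D ^^ n) b, s), ((D ^^ n) b', s')) \<in> loc_rel I S m"
  using loc_rel_map[OF additive_funpow[OF cont_A_derD(1)[OF der]] funpow_der_S_linear assms] .

lemma loc_der_eq:
  assumes x: "x \<in> loc_compl I S"
  shows "\<exists>k. \<forall>b s. (b, s) \<in> x k \<longrightarrow> loc_der I S D x n = loc_rel I S n `` {(D b, s)}"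
proof -
  obtain k where "D ` I k \<subseteq> I n"
    using cont_A_derD(2)[OF der] by meson
  then have k: "(D ^^ 1) ` I k \<subseteq> I n"
    by simp
  obtain b0 s0 where p0: "(b0, s0) \<in> x k"
    using loc_quot_nonempty[OF loc_compl_quot[OF x]] by fast
  have same_class: "loc_rel I S n `` {(D b0, s0)} = loc_rel I S n `` {(D b, s)}" if "(b, s) \<in> x k" for b s
  proof -
    have "((b0, s0), (b, s)) \<in> loc_rel I S k"
      using loc_quot_class[OF loc_compl_quot[OF x] p0] that by blast
    then show ?thesis
      using loc_rel_funpow_der[OF k] equiv_class_eq[OF equiv_loc_rel] by simp
  qed
  have "loc_der I S D x n = loc_rel I S n `` {(D b0, s0)}"
    using x same_class loc_compl_antimono[OF x] by (intro loc_der_eqI) blast+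
  with same_class show ?thesis
    by metis
qed

lemma loc_der_in_loc_compl:
  assumes x: "x \<in> loc_compl I S"
  shows "loc_der I S D x \<in> loc_compl I S"
proof -
  have in_quot: "loc_der I S D x n \<in> loc_quot I S n" for n
  proof -
    obtain k where k: "\<forall>b s. (b, s) \<in> x k \<longrightarrow> loc_der I S D x n = loc_rel I S n `` {(D b, s)}"
      using loc_der_eq[OF x] by blast
    obtain b s where "(b, s) \<in> x k"
      using loc_quot_nonempty[OF loc_compl_quot[OF x]] by fast
    moreover from this have "s \<in> S"
      using loc_quot_subset[OF loc_compl_quot[OF x]] by blast
    ultimately show ?thesis
      using k loc_class_in_quot by simp
  qed
  have "loc_der I S D x (Suc n) \<subseteq> loc_der I S D x n" for n
  proof -
    obtain k where k: "\<forall>b s. (b, s) \<in> x k \<longrightarrow> loc_der I S D x n = loc_rel I S n `` {(D b, s)}"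
      using loc_der_eq[OF x] by blast
    obtain k' where k': "\<forall>b s. (b, s) \<in> x k' \<longrightarrow>
        loc_der I S D x (Suc n) = loc_rel I S (Suc n) `` {(D b, s)}"
      using loc_der_eq[OF x] by blast
    obtain b s where "(b, s) \<in> x (max k k')"
      using loc_quot_nonempty[OF loc_compl_quot[OF x]] by fast
    then have "(b, s) \<in> x k" and "(b, s) \<in> x k'"
      using loc_compl_antimono[OF x, of k "max k k'"] loc_compl_antimono[OF x, of k' "max k k'"]
      by auto
    then show ?thesis
      using k k' loc_rel_antimono[of n "Suc n"] by auto
  qed
  with in_quot show ?thesis
    by (simp add: loc_compl_def)
qed

lemma funpow_loc_der_eq:
  assumes "x \<in> loc_compl I S"
  shows "\<exists>k. \<forall>b s. (b, s) \<in> x k \<longrightarrow> (loc_der I S D ^^ n) x m = loc_rel I S m `` {((D ^^ n) b, s)}"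
  using assms
proof (induction n arbitrary: x m)
  case 0
  have "x m = loc_rel I S m `` {(b, s)}" if "(b, s) \<in> x m" for b s
    using loc_quot_class[OF loc_compl_quot[OF "0"] that] .
  then show ?case
    by auto
next
  case (Suc n)
  obtain k where k: "\<forall>b s. (b, s) \<in> loc_der I S D x k \<longrightarrow>
      (loc_der I S D ^^ n) (loc_der I S D x) m = loc_rel I S m `` {((D ^^ n) b, s)}"
    using Suc.IH[OF loc_der_in_loc_compl[OF Suc.prems]] by blast
  obtain k' where k': "\<forall>b s. (b, s) \<in> x k' \<longrightarrow> loc_der I S D x k = loc_rel I S k `` {(D b, s)}"
    using loc_der_eq[OF Suc.prems] by blast
  have "(loc_der I S D ^^ Suc n) x m = loc_rel I S m `` {((D ^^ Suc n) b, s)}" if "(b, s) \<in> x k'" for b s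
  proof -
    have "s \<in> S"
      using loc_quot_subset[OF loc_compl_quot[OF Suc.prems]] that by blast
    then have "(D b, s) \<in> loc_der I S D x k"
      using k' that equiv_class_self[OF equiv_loc_rel] by simp
    then show ?thesis
      using k by (simp add: funpow_Suc_right funpow_swap1)
  qed
  then show ?case
    by blast
qed

lemma compl_top_integrable_loc_der:
  assumes int: "top_integrable I D"
  shows "compl_top_integrable I S (loc_der I S D)"
  unfolding compl_top_integrable_def
proof (intro ballI allI)
  fix x m assume x: "x \<in> loc_compl I S"
  have "iterates_equicontinuous I D" and lim: "iterates_tendsto_zero I D"
    using int top_integrable_iff[OF lin der] by simp_all
  then obtain q where q: "\<And>n. (D ^^ n) ` I q \<subseteq> I m"
    unfolding iterates_equicontinuous_def by meson
  obtain b0 s0 where p0: "(b0, s0) \<in> x q"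
    using loc_quot_nonempty[OF loc_compl_quot[OF x]] by fast
  have "s0 \<in> S"
    using loc_quot_subset[OF loc_compl_quot[OF x]] p0 by blast
  obtain n0 where n0: "\<And>n. n \<ge> n0 \<Longrightarrow> (D ^^ n) b0 \<in> I m"
    using lim unfolding iterates_tendsto_zero_def eventually_sequentially by meson
  have "(loc_der I S D ^^ n) y m = loc_rel I S m `` {(0, 1)}"
    if "n \<ge> n0" and y: "y \<in> loc_compl I S" and "y q = x q" for n y
  proof -
    obtain k where k: "\<forall>b s. (b, s) \<in> y k \<longrightarrow>
        (loc_der I S D ^^ n) y m = loc_rel I S m `` {((D ^^ n) b, s)}"
      using funpow_loc_der_eq[OF y] by blast
    obtain b s where p: "(b, s) \<in> y (max k q)"
      using loc_quot_nonempty[OF loc_compl_quot[OF y]] by fast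
    then have "(b, s) \<in> y k" and "(b, s) \<in> x q"
      using loc_compl_antimono[OF y, of k "max k q"] loc_compl_antimono[OF y, of q "max k q"]
        \<open>y q = x q\<close> by auto
    then have "((b0, s0), (b, s)) \<in> loc_rel I S q"
      using loc_quot_class[OF loc_compl_quot[OF x] p0] by blast
    then have "(((D ^^ n) b0, s0), ((D ^^ n) b, s)) \<in> loc_rel I S m"
      using loc_rel_funpow_der[OF q] by blast
    moreover have "(((D ^^ n) b0, s0), (0, 1)) \<in> loc_rel I S m"
      using n0[OF \<open>n \<ge> n0\<close>] \<open>s0 \<in> S\<close> one_S by (force simp: loc_rel_def)
    ultimately have "loc_rel I S m `` {((D ^^ n) b, s)} = loc_rel I S m `` {(0, 1)}"
      using equiv_class_eq[OF equiv_loc_rel] by metis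
    then show ?thesis
      using k \<open>(b, s) \<in> y k\<close> by simp
  qed
  then show "\<exists>k n0. \<forall>n\<ge>n0. \<forall>y\<in>loc_compl I S. y k = x k \<longrightarrow>
      (loc_der I S D ^^ n) y m = loc_rel I S m `` {(0, 1)}"
    by blast
qed

end

end

theorem proposition2p28:
  fixes IA :: "nat \<Rightarrow> 'a::comm_ring_1 set" and I :: "nat \<Rightarrow> 'b::comm_ring_1 set"
    and phi :: "'a \<Rightarrow> 'b" and D :: "'b \<Rightarrow> 'b"
  assumes "lin_top IA"
    and "\<forall>n::nat. n \<noteq> 0 \<longrightarrow> (\<exists>y::'a. of_nat n * y = 1)"
    and "complete_top I" and "ring_hom phi" and "cont_map IA I phi"
    and "cont_A_der I phi D" and "top_integrable I D"
  shows "(\<forall>f. D f = 0 \<longrightarrow> cont_A_der I phi (\<lambda>b. f * D b) \<and> top_integrable I (\<lambda>b. f * D b))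
    \<and> (\<forall>S. S \<subseteq> {f. D f = 0} \<and> 1 \<in> S \<and> (\<forall>s\<in>S. \<forall>t\<in>S. s * t \<in> S)
          \<longrightarrow> compl_top_integrable I S (loc_der I S D))
    \<and> (\<forall>(J :: nat \<Rightarrow> 'c::comm_ring_1 set) pi Dbar.
          complete_top J \<and> ring_hom pi \<and> cont_map I J pi \<and> surj pi \<and> open_map I J pi
          \<and> D ` {b. pi b = 0} \<subseteq> {b. pi b = 0} \<and> (\<forall>b. Dbar (pi b) = pi (D b))
          \<longrightarrow> cont_A_der J (pi \<circ> phi) Dbar \<and> top_integrable J Dbar)
    \<and> (\<forall>D'. cont_A_der I phi D' \<and> top_integrable I D' \<and> D \<circ> D' = D' \<circ> D
          \<longrightarrow> cont_A_der I phi (\<lambda>b. D b + D' b) \<and> top_integrable I (\<lambda>b. D b + D' b))"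
proof (intro conjI allI impI; (elim conjE)?)
  have lin: "lin_top I"
    using assms(3) by (rule complete_top_lin_top)
  note der = assms(6) and int = assms(7)
  show "cont_A_der I phi (\<lambda>b. f * D b)" and "top_integrable I (\<lambda>b. f * D b)" if "D f = 0" for f
    using cont_A_der_mult[OF lin der] top_integrable_kernel_mult[OF lin der int that] by blast+
  show "compl_top_integrable I S (loc_der I S D)"
    if "S \<subseteq> {f. D f = 0}" and "1 \<in> S" and "\<forall>s\<in>S. \<forall>t\<in>S. s * t \<in> S" for S
    using compl_top_integrable_loc_der[OF lin that(2) _ der _ int] that by blast
  show "cont_A_der J (pi \<circ> phi) Dbar" and "top_integrable J Dbar"
    if "complete_top J" "ring_hom pi" "cont_map I J pi" "surj pi" "open_map I J pi"
      and "D ` {b. pi b = 0} \<subseteq> {b. pi b = 0}" and "\<forall>b. Dbar (pi b) = pi (D b)"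
    for J :: "nat \<Rightarrow> 'c::comm_ring_1 set" and pi Dbar
    using cont_A_der_top_integrable_quotient[OF lin der int complete_top_lin_top that(2-5)] that
    by (simp_all add: fun_eq_iff)
  show "cont_A_der I phi (\<lambda>b. D b + D' b)" and "top_integrable I (\<lambda>b. D b + D' b)"
    if "cont_A_der I phi D'" and "top_integrable I D'" and "D \<circ> D' = D' \<circ> D" for D'
    using cont_A_der_add[OF lin der that(1)] top_integrable_add_commuting[OF lin der int that] by blast+
qed

end
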